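(* Let $G+v$ be a graph with an isolated vertex $v$, and let $G$ be the graph obtained from $G+v$ by deleting $v$. Then $\lfloor \mathrm{sp}\rfloor(G+v)=\lfloor \mathrm{sp}\rfloor(G)$. Moreover, if $G$ is a minor of a graph $H$ and $\lfloor \mathrm{sp}\rfloor(G)=\mathrm{sp}(H)$, then there is a graph $H^+$, with exactly one more vertex than $H$, such that $\lfloor \mathrm{sp}\rfloor(G+v)=\mathrm{sp}(H^+)$ and $G+v$ is a minor of $H^+$.
   Context: All graphs are finite, have at least one vertex, have no loops, and may have multiple (parallel) edges. A unique shortest path is a shortest $u$–$v$ path $P$ such that every $u$–$v$ path with the same number of vertices is identical to $P$, where two paths with different edge sequences are different even if their vertex sequences agree; a single vertex is a unique shortest path. The parade number $\mathrm{usp}(G)$ is the largest number of vertices of a unique shortest path in $G$. The spectator number is $\mathrm{sp}(G)=|V(G)|-\mathrm{usp}(G)$. A minor of $H$ is any graph obtained from $H$ by a sequence of: deleting an isolated vertex, deleting an edge, contracting an edge that has no edge parallel to it. The spectator floor $\lfloor \mathrm{sp}\rfloor(G)$ is the minimum of $\mathrm{sp}(H)$ over all graphs $H$ of which $G$ is a minor. *)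

theory Defs
  imports Main
begin

text \<open>Finite multigraphs without loops: a vertex set, an edge set, and for each edge
  its set of two distinct end vertices. Parallel edges are distinct edge names with
  the same ends.\<close>

record ('v, 'e) mgraph =
  verts :: "'v set"
  edges :: "'e set"
  ends  :: "'e \<Rightarrow> 'v set"

definition is_graph :: "('v, 'e) mgraph \<Rightarrow> bool" where
  "is_graph G \<longleftrightarrow> finite (verts G) \<and> verts G \<noteq> {} \<and> finite (edges G) \<and>
     (\<forall>e\<in>edges G. ends G e \<subseteq> verts G \<and> card (ends G e) = 2)"

definition is_path :: "('v, 'e) mgraph \<Rightarrow> 'v list \<Rightarrow> 'e list \<Rightarrow> bool" where
  "is_path G vs es \<longleftrightarrow> vs \<noteq> [] \<and> length vs = Suc (length es) \<and> distinct vs \<and>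
     set vs \<subseteq> verts G \<and> set es \<subseteq> edges G \<and>
     (\<forall>i < length es. ends G (es ! i) = {vs ! i, vs ! Suc i})"

definition is_usp :: "('v, 'e) mgraph \<Rightarrow> 'v list \<Rightarrow> 'e list \<Rightarrow> bool" where
  "is_usp G vs es \<longleftrightarrow> is_path G vs es \<and>
     (\<forall>vs' es'. is_path G vs' es' \<and> hd vs' = hd vs \<and> last vs' = last vs \<longrightarrow>
        length vs \<le> length vs') \<and>
     (\<forall>vs' es'. is_path G vs' es' \<and> hd vs' = hd vs \<and> last vs' = last vs \<and>
        length vs' = length vs \<longrightarrow> vs' = vs \<and> es' = es)"

definition usp :: "('v, 'e) mgraph \<Rightarrow> nat" where
  "usp G = Max {length vs | vs es. is_usp G vs es}"

definition sp :: "('v, 'e) mgraph \<Rightarrow> nat" where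
  "sp G = card (verts G) - usp G"

definition isolated :: "('v, 'e) mgraph \<Rightarrow> 'v \<Rightarrow> bool" where
  "isolated G x \<longleftrightarrow> x \<in> verts G \<and> (\<forall>e\<in>edges G. x \<notin> ends G e)"

definition del_vertex :: "('v, 'e) mgraph \<Rightarrow> 'v \<Rightarrow> ('v, 'e) mgraph" where
  "del_vertex G x = G\<lparr>verts := verts G - {x}\<rparr>"

definition del_edge :: "('v, 'e) mgraph \<Rightarrow> 'e \<Rightarrow> ('v, 'e) mgraph" where
  "del_edge G e = G\<lparr>edges := edges G - {e}\<rparr>"

definition contract :: "('v, 'e) mgraph \<Rightarrow> 'e \<Rightarrow> 'v \<Rightarrow> 'v \<Rightarrow> ('v, 'e) mgraph" where
  "contract G e a b =
     \<lparr>verts = verts G - {b}, edges = edges G - {e},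
      ends = (\<lambda>f. (\<lambda>x. if x = b then a else x) ` ends G f)\<rparr>"

inductive minor_step :: "('v, 'e) mgraph \<Rightarrow> ('v, 'e) mgraph \<Rightarrow> bool" where
  del_iso: "isolated H x \<Longrightarrow> minor_step H (del_vertex H x)"
| del_e: "e \<in> edges H \<Longrightarrow> minor_step H (del_edge H e)"
| contr: "e \<in> edges H \<Longrightarrow> ends H e = {a, b} \<Longrightarrow> a \<noteq> b \<Longrightarrow>
     (\<forall>f\<in>edges H. f \<noteq> e \<longrightarrow> ends H f \<noteq> ends H e) \<Longrightarrow>
     minor_step H (contract H e a b)"

definition graph_iso :: "('v, 'e) mgraph \<Rightarrow> ('w, 'f) mgraph \<Rightarrow> bool" where
  "graph_iso G H \<longleftrightarrow> (\<exists>f g. bij_betw f (verts G) (verts H) \<and> bij_betw g (edges G) (edges H) \<and>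
     (\<forall>e\<in>edges G. ends H (g e) = f ` ends G e))"

definition is_minor :: "('v, 'e) mgraph \<Rightarrow> ('w, 'f) mgraph \<Rightarrow> bool" where
  "is_minor G H \<longleftrightarrow> (\<exists>H'. minor_step\<^sup>*\<^sup>* H H' \<and> graph_iso H' G)"

text \<open>Spectator floor: minimum of sp(H) over all graphs H having G as a minor.
  Every finite graph is isomorphic to one on natural-number vertices and edges,
  so it suffices to range over such H.\<close>
definition spfloor :: "('v, 'e) mgraph \<Rightarrow> nat" where
  "spfloor G = Inf {sp H | H :: (nat, nat) mgraph. is_graph H \<and> is_minor G H}"

end

theory Submission
  imports Defs
begin

text \<open>Deleting an isolated vertex is a minor operation, so every host of G+v is a host of G.
  Conversely, let H be a host of G and attach a new vertex w by a single edge to the first vertex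
  of a longest unique shortest path P of H. A shortest path from w has to leave w along the new
  edge, so wP is again a unique shortest path, one vertex longer than P, and the spectator number
  does not grow. Deleting the new edge leaves w isolated, and w can be carried along the minor
  operations that turn H into G, where it becomes v; so G+v is a minor of the new host.\<close>

definition ends_in_verts :: "('v, 'e) mgraph \<Rightarrow> bool" where
  "ends_in_verts H \<longleftrightarrow> (\<forall>e\<in>edges H. ends H e \<subseteq> verts H)"

definition graph_iso_via ::
    "('v \<Rightarrow> 'w) \<Rightarrow> ('e \<Rightarrow> 'f) \<Rightarrow> ('v, 'e) mgraph \<Rightarrow> ('w, 'f) mgraph \<Rightarrow> bool" where
  "graph_iso_via p q A B \<longleftrightarrow> bij_betw p (verts A) (verts B) \<and> bij_betw q (edges A) (edges B) \<and>
     (\<forall>e\<in>edges A. ends B (q e) = p ` ends A e)"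

definition add_vertex :: "('v, 'e) mgraph \<Rightarrow> 'v \<Rightarrow> ('v, 'e) mgraph" where
  "add_vertex H w = H\<lparr>verts := insert w (verts H)\<rparr>"

definition add_pendant :: "('v, 'e) mgraph \<Rightarrow> 'v \<Rightarrow> 'e \<Rightarrow> 'v \<Rightarrow> ('v, 'e) mgraph" where
  "add_pendant H w \<epsilon> u =
     \<lparr>verts = insert w (verts H), edges = insert \<epsilon> (edges H), ends = (ends H)(\<epsilon> := {w, u})\<rparr>"

section \<open>Isomorphisms\<close>

lemma is_graph_ends_in_verts: "is_graph H \<Longrightarrow> ends_in_verts H"
  by (simp add: is_graph_def ends_in_verts_def)

lemma graph_iso_iff_via: "graph_iso A B \<longleftrightarrow> (\<exists>p q. graph_iso_via p q A B)"
  unfolding graph_iso_def graph_iso_via_def ..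

lemma bij_betw_Diff_singleton: "bij_betw f A B \<Longrightarrow> x \<in> A \<Longrightarrow> bij_betw f (A - {x}) (B - {f x})"
  by (rule bij_betw_DiffI) (auto simp: bij_betw_def)

lemma the_inv_into_image_image:
  "inj_on f A \<Longrightarrow> S \<subseteq> A \<Longrightarrow> the_inv_into A f ` f ` S = S"
  by (force simp: image_image the_inv_into_f_f)

lemma graph_iso_via_inv:
  assumes iso: "graph_iso_via p q A B" and A: "ends_in_verts A"
  shows "graph_iso_via (the_inv_into (verts A) p) (the_inv_into (edges A) q) B A"
proof -
  have p: "bij_betw p (verts A) (verts B)" and q: "bij_betw q (edges A) (edges B)"
    and ends_q: "\<forall>e\<in>edges A. ends B (q e) = p ` ends A e"
    using iso by (simp_all add: graph_iso_via_def)
  have "ends A (the_inv_into (edges A) q e') = the_inv_into (verts A) p ` ends B e'"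
    if e': "e' \<in> edges B" for e'
  proof -
    obtain e where e: "e \<in> edges A" "e' = q e" using q e' unfolding bij_betw_def by blast
    have "ends A e \<subseteq> verts A" using A e(1) unfolding ends_in_verts_def by blast
    then have "the_inv_into (verts A) p ` p ` ends A e = ends A e"
      by (rule the_inv_into_image_image[OF bij_betw_imp_inj_on[OF p]])
    moreover have "the_inv_into (edges A) q e' = e"
      unfolding e(2) using bij_betw_imp_inj_on[OF q] e(1) by (rule the_inv_into_f_f)
    ultimately show ?thesis using ends_q e by simp
  qed
  then show ?thesis
    using bij_betw_the_inv_into[OF p] bij_betw_the_inv_into[OF q] unfolding graph_iso_via_def by blast
qed

lemma graph_iso_sym: "graph_iso A B \<Longrightarrow> ends_in_verts A \<Longrightarrow> graph_iso B A"
  by (meson graph_iso_iff_via graph_iso_via_inv)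

lemma graph_iso_via_comp:
  assumes "graph_iso_via p q A B" "graph_iso_via p' q' B C"
  shows "graph_iso_via (p' \<circ> p) (q' \<circ> q) A C"
proof -
  have p: "bij_betw p (verts A) (verts B)" and q: "bij_betw q (edges A) (edges B)"
    and ends_q: "\<forall>e\<in>edges A. ends B (q e) = p ` ends A e"
    and p': "bij_betw p' (verts B) (verts C)" and q': "bij_betw q' (edges B) (edges C)"
    and ends_q': "\<forall>e\<in>edges B. ends C (q' e) = p' ` ends B e"
    using assms by (simp_all add: graph_iso_via_def)
  have "ends C (q' (q e)) = p' ` p ` ends A e" if e: "e \<in> edges A" for e
    using ends_q e ends_q' bij_betw_apply[OF q e] by simp
  then show ?thesis
    using bij_betw_trans[OF p p'] bij_betw_trans[OF q q'] by (simp add: graph_iso_via_def image_comp)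
qed

lemma graph_iso_trans: "graph_iso A B \<Longrightarrow> graph_iso B C \<Longrightarrow> graph_iso A C"
  by (meson graph_iso_iff_via graph_iso_via_comp)

lemma graph_iso_ends_in_verts:
  assumes "graph_iso A B" "ends_in_verts A"
  shows "ends_in_verts B"
proof -
  obtain p q where p: "p ` verts A = verts B" and q: "q ` edges A = edges B"
    and ends_q: "\<forall>e\<in>edges A. ends B (q e) = p ` ends A e"
    using assms(1) by (auto simp: graph_iso_def bij_betw_def)
  show ?thesis
    unfolding ends_in_verts_def
  proof
    fix e' assume "e' \<in> edges B"
    then obtain e where "e \<in> edges A" "e' = q e" using q by blast
    then show "ends B e' \<subseteq> verts B"
      using ends_q assms(2) p by (force simp: ends_in_verts_def)
  qed
qed

lemma ex_nat_graph_iso: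
  fixes H :: "('w, 'f) mgraph"
  assumes "is_graph H"
  obtains Hn :: "(nat, nat) mgraph" where "is_graph Hn" "graph_iso H Hn"
proof -
  have fin: "finite (verts H)" "finite (edges H)" using assms by (simp_all add: is_graph_def)
  obtain f :: "'w \<Rightarrow> nat" where f: "inj_on f (verts H)"
    using finite_imp_inj_to_nat_seg[OF fin(1)] by blast
  obtain g :: "'f \<Rightarrow> nat" where g: "inj_on g (edges H)"
    using finite_imp_inj_to_nat_seg[OF fin(2)] by blast
  define Hn :: "(nat, nat) mgraph" where
    "Hn = \<lparr>verts = f ` verts H, edges = g ` edges H,
           ends = (\<lambda>x. f ` ends H (the_inv_into (edges H) g x))\<rparr>"
  have ends_g: "\<forall>e\<in>edges H. ends Hn (g e) = f ` ends H e"
    using g by (simp add: Hn_def the_inv_into_f_f)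
  then have iso: "graph_iso_via f g H Hn"
    using f g by (simp add: graph_iso_via_def Hn_def bij_betw_def)
  moreover have "is_graph Hn"
    unfolding is_graph_def
  proof (intro conjI ballI)
    show "finite (verts Hn)" "finite (edges Hn)" "verts Hn \<noteq> {}"
      using fin assms by (simp_all add: Hn_def is_graph_def)
    fix x assume "x \<in> edges Hn"
    then obtain e where e: "e \<in> edges H" "x = g e" by (auto simp: Hn_def)
    then have "ends H e \<subseteq> verts H" "card (ends H e) = 2" using assms by (simp_all add: is_graph_def)
    then show "ends Hn x \<subseteq> verts Hn" "card (ends Hn x) = 2"
      using ends_g e card_image[OF inj_on_subset[OF f]] by (auto simp: Hn_def)
  qed
  ultimately show ?thesis using that graph_iso_iff_via by blast
qed

section \<open>Minor operations and isomorphisms\<close>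

lemma minor_step_ends_in_verts: "minor_step H H' \<Longrightarrow> ends_in_verts H \<Longrightarrow> ends_in_verts H'"
  by (induction rule: minor_step.induct)
    (fastforce simp: ends_in_verts_def isolated_def del_vertex_def del_edge_def contract_def)+

lemma minor_steps_ends_in_verts: "minor_step\<^sup>*\<^sup>* H H' \<Longrightarrow> ends_in_verts H \<Longrightarrow> ends_in_verts H'"
  by (induction rule: rtranclp_induct) (auto intro: minor_step_ends_in_verts)

lemma minor_step_verts_subset: "minor_step H H' \<Longrightarrow> verts H' \<subseteq> verts H"
  by (induction rule: minor_step.induct) (auto simp: del_vertex_def del_edge_def contract_def)

lemma minor_steps_verts_subset: "minor_step\<^sup>*\<^sup>* H H' \<Longrightarrow> verts H' \<subseteq> verts H"
  by (induction rule: rtranclp_induct) (use minor_step_verts_subset in blast)+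

lemma isolated_graph_iso_via:
  assumes iso: "graph_iso_via p q A B" and A: "ends_in_verts A" and x: "isolated A x"
  shows "isolated B (p x)"
proof -
  have p: "bij_betw p (verts A) (verts B)" and q: "bij_betw q (edges A) (edges B)"
    and ends_q: "\<forall>e\<in>edges A. ends B (q e) = p ` ends A e"
    using iso by (simp_all add: graph_iso_via_def)
  show ?thesis
    unfolding isolated_def
  proof (intro conjI ballI)
    show "p x \<in> verts B" using p x by (simp add: bij_betw_apply isolated_def)
    fix e' assume "e' \<in> edges B"
    then obtain e where e: "e \<in> edges A" "e' = q e" using q unfolding bij_betw_def by blast
    have "p x \<noteq> p y" if "y \<in> ends A e" for y
      using that e(1) x A inj_onD[OF bij_betw_imp_inj_on[OF p], of x y]
      by (auto simp: isolated_def ends_in_verts_def)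
    then have "p x \<notin> p ` ends A e" by (simp add: image_iff)
    then show "p x \<notin> ends B e'" using ends_q e by simp
  qed
qed

lemma graph_iso_via_del_vertex:
  "graph_iso_via p q A B \<Longrightarrow> x \<in> verts A \<Longrightarrow>
    graph_iso_via p q (del_vertex A x) (del_vertex B (p x))"
  by (simp add: graph_iso_via_def del_vertex_def bij_betw_Diff_singleton)

lemma graph_iso_via_del_edge:
  "graph_iso_via p q A B \<Longrightarrow> e \<in> edges A \<Longrightarrow>
    graph_iso_via p q (del_edge A e) (del_edge B (q e))"
  by (simp add: graph_iso_via_def del_edge_def bij_betw_Diff_singleton)

lemma graph_iso_via_contract:
  assumes iso: "graph_iso_via p q A B" and A: "ends_in_verts A"
    and e: "e \<in> edges A" "ends A e = {a, b}"
  shows "graph_iso_via p q (contract A e a b) (contract B (q e) (p a) (p b))"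
proof -
  have p: "bij_betw p (verts A) (verts B)" and q: "bij_betw q (edges A) (edges B)"
    and ends_q: "\<forall>e\<in>edges A. ends B (q e) = p ` ends A e"
    using iso by (simp_all add: graph_iso_via_def)
  have ab: "a \<in> verts A" "b \<in> verts A" using A e by (auto simp: ends_in_verts_def)
  have "(\<lambda>y. if y = p b then p a else y) ` p ` ends A f = p ` (\<lambda>x. if x = b then a else x) ` ends A f"
    if "f \<in> edges A" for f
    unfolding image_image
  proof (rule image_cong[OF refl])
    fix x assume "x \<in> ends A f"
    then have "x \<in> verts A" using A that by (auto simp: ends_in_verts_def)
    then show "(if p x = p b then p a else p x) = p (if x = b then a else x)"
      using p ab inj_onD[of p "verts A" x b] by (auto simp: bij_betw_def)
  qed
  then show ?thesis
    using ends_q ab e bij_betw_Diff_singleton[OF p] bij_betw_Diff_singleton[OF q]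
    by (simp add: graph_iso_via_def contract_def)
qed

lemma minor_step_graph_iso_via:
  assumes "minor_step A A'" and iso: "graph_iso_via p q A B" and A: "ends_in_verts A"
  shows "\<exists>B'. minor_step B B' \<and> graph_iso_via p q A' B'"
  using assms(1)
proof cases
  case (del_iso x)
  then show ?thesis
    using isolated_graph_iso_via[OF iso A] graph_iso_via_del_vertex[OF iso]
    by (meson isolated_def minor_step.del_iso)
next
  case (del_e e)
  then show ?thesis
    using graph_iso_via_del_edge[OF iso] iso
    by (meson bij_betw_apply graph_iso_via_def minor_step.del_e)
next
  case (contr e a b)
  have p: "inj_on p (verts A)" and q: "bij_betw q (edges A) (edges B)"
    and ends_q: "\<forall>e\<in>edges A. ends B (q e) = p ` ends A e"
    using iso by (simp_all add: graph_iso_via_def bij_betw_def)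
  have ab: "a \<in> verts A" "b \<in> verts A" using A contr by (auto simp: ends_in_verts_def)
  have no_parallel: "\<forall>f\<in>edges B. f \<noteq> q e \<longrightarrow> ends B f \<noteq> ends B (q e)"
  proof (intro ballI impI)
    fix f assume "f \<in> edges B" "f \<noteq> q e"
    then obtain f' where f': "f' \<in> edges A" "f = q f'" "f' \<noteq> e"
      using q unfolding bij_betw_def by blast
    then have "ends A f' \<noteq> ends A e" using contr by blast
    then have "p ` ends A f' \<noteq> p ` ends A e"
      using inj_on_image_eq_iff[OF p] A f' contr(2) by (metis ends_in_verts_def)
    then show "ends B f \<noteq> ends B (q e)" using ends_q f' contr(2) by simp
  qed
  have "q e \<in> edges B" using q contr(2) by (rule bij_betw_apply)
  moreover have "ends B (q e) = {p a, p b}" using ends_q contr(2,3) by simp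
  moreover have "p a \<noteq> p b" using inj_onD[OF p _ ab] contr(4) by blast
  ultimately have "minor_step B (contract B (q e) (p a) (p b))"
    using no_parallel by (rule minor_step.contr)
  then show ?thesis using graph_iso_via_contract[OF iso A contr(2,3)] contr(1) by blast
qed

lemma minor_steps_graph_iso_via:
  assumes "minor_step\<^sup>*\<^sup>* A A'" and iso: "graph_iso_via p q A B" and A: "ends_in_verts A"
  shows "\<exists>B'. minor_step\<^sup>*\<^sup>* B B' \<and> graph_iso_via p q A' B'"
  using assms(1)
proof (induction rule: rtranclp_induct)
  case base
  then show ?case using iso by blast
next
  case (step A1 A2)
  then obtain B1 where "minor_step\<^sup>*\<^sup>* B B1" "graph_iso_via p q A1 B1" by blast
  moreover have "ends_in_verts A1" using step(1) A by (rule minor_steps_ends_in_verts)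
  ultimately show ?case
    using minor_step_graph_iso_via[OF step(2)] by (meson rtranclp.rtrancl_into_rtrancl)
qed

lemma is_minor_graph_iso_host:
  assumes "is_minor G H" "graph_iso H H'" "ends_in_verts H"
  shows "is_minor G H'"
proof -
  obtain H1 where steps: "minor_step\<^sup>*\<^sup>* H H1" and iso: "graph_iso H1 G"
    using assms(1) by (auto simp: is_minor_def)
  obtain p q where "graph_iso_via p q H H'" using assms(2) by (auto simp: graph_iso_iff_via)
  then obtain H1' where steps': "minor_step\<^sup>*\<^sup>* H' H1'" and "graph_iso_via p q H1 H1'"
    using minor_steps_graph_iso_via steps assms(3) by blast
  then have "graph_iso H1' H1"
    using graph_iso_sym minor_steps_ends_in_verts[OF steps assms(3)] graph_iso_iff_via by blast
  with iso steps' show ?thesis by (meson graph_iso_trans is_minor_def)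
qed

lemma is_minor_minor_step:
  assumes "is_minor G H" "minor_step G G'" "ends_in_verts H"
  shows "is_minor G' H"
proof -
  obtain H1 where steps: "minor_step\<^sup>*\<^sup>* H H1" and iso: "graph_iso H1 G"
    using assms(1) by (auto simp: is_minor_def)
  have H1: "ends_in_verts H1" using steps assms(3) by (rule minor_steps_ends_in_verts)
  have G: "ends_in_verts G" using iso H1 by (rule graph_iso_ends_in_verts)
  obtain p q where "graph_iso_via p q G H1" using graph_iso_sym[OF iso H1] graph_iso_iff_via by blast
  then obtain H2 where step: "minor_step H1 H2" and "graph_iso_via p q G' H2"
    using minor_step_graph_iso_via assms(2) G by blast
  then have "graph_iso H2 G'"
    using graph_iso_sym minor_step_ends_in_verts[OF assms(2) G] graph_iso_iff_via by blast
  with steps step show ?thesis by (meson is_minor_def rtranclp.rtrancl_into_rtrancl)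
qed

section \<open>Adding an isolated vertex or a pendant vertex\<close>

lemma minor_step_add_vertex:
  assumes "minor_step H H'" "ends_in_verts H" "w \<notin> verts H"
  shows "minor_step (add_vertex H w) (add_vertex H' w)"
  using assms(1)
proof cases
  case (del_iso x)
  then have "x \<noteq> w" using assms(3) by (auto simp: isolated_def)
  then have "del_vertex (add_vertex H w) x = add_vertex H' w"
    using del_iso by (simp add: del_vertex_def add_vertex_def insert_Diff_if)
  moreover have "isolated (add_vertex H w) x"
    using del_iso by (auto simp: isolated_def add_vertex_def)
  ultimately show ?thesis by (metis minor_step.del_iso)
next
  case (del_e e)
  then have "del_edge (add_vertex H w) e = add_vertex H' w"
    by (simp add: del_edge_def add_vertex_def)
  then show ?thesis
    using minor_step.del_e[of e "add_vertex H w"] del_e by (simp add: add_vertex_def)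
next
  case (contr e a b)
  then have "b \<noteq> w" using assms(2,3) by (auto simp: ends_in_verts_def)
  then have "contract (add_vertex H w) e a b = add_vertex H' w"
    using contr by (simp add: contract_def add_vertex_def insert_Diff_if)
  then show ?thesis
    using contr minor_step.contr[of e "add_vertex H w" a b] by (simp add: add_vertex_def)
qed

lemma minor_steps_add_vertex:
  assumes "minor_step\<^sup>*\<^sup>* H H'" "ends_in_verts H" "w \<notin> verts H"
  shows "minor_step\<^sup>*\<^sup>* (add_vertex H w) (add_vertex H' w)"
  using assms(1)
proof (induction rule: rtranclp_induct)
  case base
  then show ?case by simp
next
  case (step H1 H2)
  have "ends_in_verts H1" "w \<notin> verts H1"
    using step(1) assms(2,3) minor_steps_ends_in_verts minor_steps_verts_subset by blast+
  then show ?case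
    using step minor_step_add_vertex by (meson rtranclp.rtrancl_into_rtrancl)
qed

lemma graph_iso_via_add_vertex:
  assumes "graph_iso_via p q A B" "ends_in_verts A" "w \<notin> verts A" "v \<notin> verts B"
  shows "graph_iso_via (p(w := v)) q (add_vertex A w) (add_vertex B v)"
proof -
  have "bij_betw (p(w := v)) (verts A) (verts B) = bij_betw p (verts A) (verts B)"
    using assms(3) by (intro bij_betw_cong) auto
  then have "bij_betw (p(w := v)) (verts A) (verts B)"
    using assms(1) by (simp add: graph_iso_via_def)
  then have "bij_betw (p(w := v)) (insert w (verts A)) (insert v (verts B))"
    using notIn_Un_bij_betw[of w "verts A" "p(w := v)" "verts B"] assms(3,4) by simp
  moreover have "w \<notin> ends A e" if "e \<in> edges A" for e
    using assms(2,3) that by (auto simp: ends_in_verts_def)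
  ultimately show ?thesis
    using assms(1) by (auto simp: graph_iso_via_def add_vertex_def)
qed

lemma is_minor_add_vertex:
  assumes "is_minor G H" "ends_in_verts H" "w \<notin> verts H" "v \<notin> verts G"
  shows "is_minor (add_vertex G v) (add_vertex H w)"
proof -
  obtain H1 where steps: "minor_step\<^sup>*\<^sup>* H H1" and iso: "graph_iso H1 G"
    using assms(1) by (auto simp: is_minor_def)
  obtain p q where "graph_iso_via p q H1 G" using iso by (auto simp: graph_iso_iff_via)
  moreover have "ends_in_verts H1" using steps assms(2) by (rule minor_steps_ends_in_verts)
  moreover have "w \<notin> verts H1" using minor_steps_verts_subset[OF steps] assms(3) by blast
  ultimately have "graph_iso_via (p(w := v)) q (add_vertex H1 w) (add_vertex G v)"
    using assms(4) by (rule graph_iso_via_add_vertex)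
  then show ?thesis
    using minor_steps_add_vertex[OF steps assms(2,3)] by (auto simp: is_minor_def graph_iso_iff_via)
qed

lemma is_minor_add_pendant:
  assumes "is_minor G H" "ends_in_verts H" "w \<notin> verts H" "\<epsilon> \<notin> edges H" "v \<notin> verts G"
  shows "is_minor (add_vertex G v) (add_pendant H w \<epsilon> u)"
proof -
  let ?P = "add_pendant H w \<epsilon> u"
  have "graph_iso_via id id (add_vertex H w) (del_edge ?P \<epsilon>)"
    using assms(4) by (auto simp: graph_iso_via_def add_vertex_def add_pendant_def del_edge_def)
  moreover have "ends_in_verts (add_vertex H w)"
    using assms(2) by (auto simp: ends_in_verts_def add_vertex_def)
  ultimately have "is_minor (add_vertex G v) (del_edge ?P \<epsilon>)"
    using is_minor_graph_iso_host is_minor_add_vertex[OF assms(1-3,5)] graph_iso_iff_via by blast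
  moreover have "minor_step ?P (del_edge ?P \<epsilon>)"
    by (rule minor_step.del_e) (simp add: add_pendant_def)
  ultimately show ?thesis by (meson converse_rtranclp_into_rtranclp is_minor_def)
qed

lemma is_graph_add_pendant:
  assumes "is_graph H" "w \<notin> verts H" "u \<in> verts H"
  shows "is_graph (add_pendant H w \<epsilon> u)"
proof -
  have "u \<noteq> w" using assms(2,3) by blast
  then show ?thesis using assms(1,3) by (auto simp: is_graph_def add_pendant_def)
qed

section \<open>Unique shortest paths\<close>

lemma length_path_le_card: "is_path G vs es \<Longrightarrow> finite (verts G) \<Longrightarrow> length vs \<le> card (verts G)"
  unfolding is_path_def by (metis card_mono distinct_card)

lemma finite_usp_lengths: "finite (verts G) \<Longrightarrow> finite {length vs | vs es. is_usp G vs es}"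
  by (rule finite_subset[of _ "{..card (verts G)}"]) (auto simp: is_usp_def dest: length_path_le_card)

lemma is_usp_singleton: "x \<in> verts G \<Longrightarrow> is_usp G [x] []"
  unfolding is_usp_def is_path_def by (auto simp: Suc_length_conv length_Suc_conv)

lemma length_le_usp: "finite (verts G) \<Longrightarrow> is_usp G vs es \<Longrightarrow> length vs \<le> usp G"
  unfolding usp_def by (rule Max_ge[OF finite_usp_lengths]) auto

lemma usp_attained:
  assumes "finite (verts G)" "verts G \<noteq> {}"
  obtains vs es where "is_usp G vs es" "length vs = usp G"
proof -
  obtain x where "x \<in> verts G" using assms(2) by blast
  then have "usp G \<in> {length vs | vs es. is_usp G vs es}"
    unfolding usp_def using finite_usp_lengths[OF assms(1)] is_usp_singleton
    by (intro Max_in) fastforce+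
  with that show ?thesis by auto
qed

lemma is_path_graph_iso_via:
  assumes iso: "graph_iso_via p q A B" and path: "is_path A vs es"
  shows "is_path B (map p vs) (map q es)"
proof -
  have p: "bij_betw p (verts A) (verts B)" and q: "bij_betw q (edges A) (edges B)"
    and ends_q: "\<forall>e\<in>edges A. ends B (q e) = p ` ends A e"
    using iso by (simp_all add: graph_iso_via_def)
  have vs: "set vs \<subseteq> verts A" and es: "set es \<subseteq> edges A" and len: "length vs = Suc (length es)"
    and ends_es: "\<forall>i < length es. ends A (es ! i) = {vs ! i, vs ! Suc i}"
    using path by (simp_all add: is_path_def)
  have "distinct (map p vs)"
    using path vs inj_on_subset[OF bij_betw_imp_inj_on[OF p]] by (simp add: is_path_def distinct_map)
  moreover have "set (map p vs) \<subseteq> verts B" "set (map q es) \<subseteq> edges B"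
    using vs es bij_betw_imp_surj_on[OF p] bij_betw_imp_surj_on[OF q] by (auto intro!: imageI)
  moreover have "ends B (map q es ! i) = {map p vs ! i, map p vs ! Suc i}" if i: "i < length es" for i
  proof -
    have "es ! i \<in> edges A" using nth_mem[OF i] es by blast
    then show ?thesis using i len ends_es ends_q by simp
  qed
  ultimately show ?thesis
    using path len by (simp add: is_path_def)
qed

lemma is_path_graph_iso_via_pullback:
  assumes iso: "graph_iso_via p q A B" and A: "ends_in_verts A" and path: "is_path B vs' es'"
  obtains vs es where "is_path A vs es" "vs' = map p vs" "es' = map q es"
proof -
  let ?p' = "the_inv_into (verts A) p" and ?q' = "the_inv_into (edges A) q"
  have p: "bij_betw p (verts A) (verts B)" and q: "bij_betw q (edges A) (edges B)"
    using iso by (simp_all add: graph_iso_via_def)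
  have "set vs' \<subseteq> verts B" "set es' \<subseteq> edges B" using path by (simp_all add: is_path_def)
  then have "vs' = map p (map ?p' vs')" "es' = map q (map ?q' es')"
    using f_the_inv_into_f_bij_betw[OF p] f_the_inv_into_f_bij_betw[OF q]
    by (simp_all add: map_idI subsetD)
  moreover have "is_path A (map ?p' vs') (map ?q' es')"
    using is_path_graph_iso_via[OF graph_iso_via_inv[OF iso A] path] .
  ultimately show ?thesis using that by blast
qed

lemma is_usp_graph_iso_via:
  assumes iso: "graph_iso_via p q A B" and A: "ends_in_verts A" and usp: "is_usp A vs es"
  shows "is_usp B (map p vs) (map q es)"
proof -
  have path: "is_path A vs es" using usp by (simp add: is_usp_def)
  have p: "inj_on p (verts A)" using iso by (simp add: graph_iso_via_def bij_betw_def)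
  have competitor: "length vs \<le> length vs' \<and>
      (length vs' = length vs \<longrightarrow> vs' = map p vs \<and> es' = map q es)"
    if path': "is_path B vs' es'" and hd': "hd vs' = hd (map p vs)"
      and last': "last vs' = last (map p vs)" for vs' es'
  proof -
    obtain vs0 es0 where path0: "is_path A vs0 es0" and vs': "vs' = map p vs0" and es': "es' = map q es0"
      using is_path_graph_iso_via_pullback[OF iso A path'] .
    have "vs \<noteq> []" "vs0 \<noteq> []" "set vs \<subseteq> verts A" "set vs0 \<subseteq> verts A"
      using path path0 by (simp_all add: is_path_def)
    then have "hd vs0 = hd vs" "last vs0 = last vs"
      using hd' last' inj_onD[OF p] by (simp_all add: vs' hd_map last_map subset_iff)
    then have "length vs \<le> length vs0 \<and> (length vs0 = length vs \<longrightarrow> vs0 = vs \<and> es0 = es)"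
      using usp path0 unfolding is_usp_def by blast
    then show ?thesis by (auto simp: vs' es')
  qed
  show ?thesis
    unfolding is_usp_def
  proof (intro conjI allI impI)
    show "is_path B (map p vs) (map q es)" using iso path by (rule is_path_graph_iso_via)
  next
    fix vs' es'
    assume "is_path B vs' es' \<and> hd vs' = hd (map p vs) \<and> last vs' = last (map p vs)"
    then show "length (map p vs) \<le> length vs'" using competitor[of vs' es'] by simp
  next
    fix vs' es'
    assume "is_path B vs' es' \<and> hd vs' = hd (map p vs) \<and> last vs' = last (map p vs) \<and>
      length vs' = length (map p vs)"
    then show "vs' = map p vs" "es' = map q es" using competitor[of vs' es'] by simp_all
  qed
qed

lemma usp_le_graph_iso:
  assumes "graph_iso A B" "is_graph A" "is_graph B"
  shows "usp A \<le> usp B"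
proof -
  obtain p q where iso: "graph_iso_via p q A B" using assms(1) by (auto simp: graph_iso_iff_via)
  obtain vs es where usp: "is_usp A vs es" "length vs = usp A"
    using usp_attained assms(2) by (metis is_graph_def)
  have "is_usp B (map p vs) (map q es)"
    using is_usp_graph_iso_via[OF iso is_graph_ends_in_verts[OF assms(2)] usp(1)] .
  then show ?thesis
    using length_le_usp assms(3) usp(2) by (fastforce simp: is_graph_def)
qed

lemma is_path_Cons:
  "is_path G (a # vs) (e # es) \<longleftrightarrow> vs \<noteq> [] \<and> is_path G vs es \<and> a \<in> verts G \<and> a \<notin> set vs \<and>
     e \<in> edges G \<and> ends G e = {a, hd vs}"
proof
  assume path: "is_path G (a # vs) (e # es)"
  then have len: "length vs = Suc (length es)" by (simp add: is_path_def)
  then have ne: "vs \<noteq> []" by auto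
  have ends_es: "\<forall>i<Suc (length es). ends G ((e # es) ! i) = {(a # vs) ! i, (a # vs) ! Suc i}"
    using path by (simp add: is_path_def)
  have "ends G e = {a, hd vs}" using ends_es[rule_format, of 0] ne by (simp add: hd_conv_nth)
  moreover have "\<forall>i<length es. ends G (es ! i) = {vs ! i, vs ! Suc i}"
    using ends_es by (simp add: All_less_Suc2)
  ultimately show "vs \<noteq> [] \<and> is_path G vs es \<and> a \<in> verts G \<and> a \<notin> set vs \<and>
     e \<in> edges G \<and> ends G e = {a, hd vs}" using path ne len by (simp add: is_path_def)
next
  assume r: "vs \<noteq> [] \<and> is_path G vs es \<and> a \<in> verts G \<and> a \<notin> set vs \<and> e \<in> edges G \<and>
    ends G e = {a, hd vs}"
  then have "\<forall>i<length es. ends G (es ! i) = {vs ! i, vs ! Suc i}" by (simp add: is_path_def)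
  then have "\<forall>i<Suc (length es). ends G ((e # es) ! i) = {(a # vs) ! i, (a # vs) ! Suc i}"
    unfolding All_less_Suc2 using r by (simp add: hd_conv_nth)
  then show "is_path G (a # vs) (e # es)" using r by (simp add: is_path_def)
qed

lemma is_path_add_pendant:
  assumes "is_path H vs es" "\<epsilon> \<notin> edges H"
  shows "is_path (add_pendant H w \<epsilon> u) vs es"
proof -
  have "\<forall>i<length es. es ! i \<noteq> \<epsilon>" using assms unfolding is_path_def by (metis nth_mem subsetD)
  then show ?thesis using assms(1) by (auto simp: is_path_def add_pendant_def)
qed

lemma is_path_of_add_pendant:
  assumes path: "is_path (add_pendant H w \<epsilon> u) vs es" and w: "w \<notin> set vs"
  shows "is_path H vs es"
proof -
  have len: "length vs = Suc (length es)" and es: "set es \<subseteq> insert \<epsilon> (edges H)"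
    and ends_es: "\<forall>i<length es. ends (add_pendant H w \<epsilon> u) (es ! i) = {vs ! i, vs ! Suc i}"
    using path by (simp_all add: is_path_def add_pendant_def)
  have not_\<epsilon>: "es ! i \<noteq> \<epsilon>" if i: "i < length es" for i
  proof
    assume "es ! i = \<epsilon>"
    then have "{w, u} = {vs ! i, vs ! Suc i}" using ends_es[rule_format, OF i] by (simp add: add_pendant_def)
    then have "w \<in> {vs ! i, vs ! Suc i}" by (metis insertI1)
    moreover have "vs ! i \<in> set vs" "vs ! Suc i \<in> set vs" using i len by simp_all
    ultimately show False using w by blast
  qed
  have "set es \<subseteq> edges H"
  proof
    fix e assume "e \<in> set es"
    then obtain i where "i < length es" "e = es ! i" by (auto simp: in_set_conv_nth)
    then show "e \<in> edges H" using not_\<epsilon> es nth_mem by blast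
  qed
  moreover have "set vs \<subseteq> verts H" using path w by (auto simp: is_path_def add_pendant_def)
  moreover have "\<forall>i<length es. ends H (es ! i) = {vs ! i, vs ! Suc i}"
    using ends_es not_\<epsilon> by (simp add: add_pendant_def)
  ultimately show ?thesis using path by (simp add: is_path_def add_pendant_def)
qed

lemma is_usp_add_pendant:
  assumes H: "ends_in_verts H" and w: "w \<notin> verts H" and \<epsilon>: "\<epsilon> \<notin> edges H"
    and usp: "is_usp H vs es"
  shows "is_usp (add_pendant H w \<epsilon> (hd vs)) (w # vs) (\<epsilon> # es)"
proof -
  let ?P = "add_pendant H w \<epsilon> (hd vs)"
  have path: "is_path H vs es" using usp by (simp add: is_usp_def)
  have vs: "vs \<noteq> []" "set vs \<subseteq> verts H" using path by (auto simp: is_path_def)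
  have path_P: "is_path ?P (w # vs) (\<epsilon> # es)"
    unfolding is_path_Cons using vs w is_path_add_pendant[OF path \<epsilon>] by (auto simp: add_pendant_def)
  have competitor: "length (w # vs) \<le> length vs' \<and>
      (length vs' = length (w # vs) \<longrightarrow> vs' = w # vs \<and> es' = \<epsilon> # es)"
    if path': "is_path ?P vs' es'" and hd': "hd vs' = w" and last': "last vs' = last (w # vs)"
    for vs' es'
  proof -
    obtain vs1 where vs': "vs' = w # vs1"
      using path' hd' by (cases vs') (auto simp: is_path_def)
    have "last vs \<in> verts H" using vs last_in_set by blast
    then have "vs1 \<noteq> []" using last' vs' vs w by auto
    then obtain e es1 where es': "es' = e # es1"
      using path' vs' by (cases es') (auto simp: is_path_def)
    have path1: "is_path ?P vs1 es1" and w1: "w \<notin> set vs1" and "vs1 \<noteq> []"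
      and e: "e \<in> insert \<epsilon> (edges H)" "ends ?P e = {w, hd vs1}"
      using path' unfolding vs' es' is_path_Cons by (auto simp: add_pendant_def)
    have "e = \<epsilon>"
    proof (rule ccontr)
      assume "e \<noteq> \<epsilon>"
      then have "e \<in> edges H" "w \<in> ends H e" using e by (auto simp: add_pendant_def)
      then show False using H w by (auto simp: ends_in_verts_def)
    qed
    then have "{w, hd vs} = {w, hd vs1}" using e by (simp add: add_pendant_def)
    moreover have "hd vs1 \<noteq> w" using w1 \<open>vs1 \<noteq> []\<close> hd_in_set by metis
    ultimately have hd1: "hd vs1 = hd vs" by (auto simp: doubleton_eq_iff)
    have "is_path H vs1 es1" using path1 w1 by (rule is_path_of_add_pendant)
    moreover have "last vs1 = last vs" using last' vs' vs \<open>vs1 \<noteq> []\<close> by simp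
    ultimately have "length vs \<le> length vs1 \<and> (length vs1 = length vs \<longrightarrow> vs1 = vs \<and> es1 = es)"
      using usp hd1 unfolding is_usp_def by blast
    then show ?thesis using vs' es' \<open>e = \<epsilon>\<close> by auto
  qed
  show ?thesis
    unfolding is_usp_def
  proof (intro conjI allI impI)
    show "is_path ?P (w # vs) (\<epsilon> # es)" by (rule path_P)
  next
    fix vs' es'
    assume "is_path ?P vs' es' \<and> hd vs' = hd (w # vs) \<and> last vs' = last (w # vs)"
    then show "length (w # vs) \<le> length vs'" using competitor[of vs' es'] by simp
  next
    fix vs' es'
    assume "is_path ?P vs' es' \<and> hd vs' = hd (w # vs) \<and> last vs' = last (w # vs) \<and>
      length vs' = length (w # vs)"
    then show "vs' = w # vs" "es' = \<epsilon> # es" using competitor[of vs' es'] by simp_all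
  qed
qed

section \<open>The spectator floor\<close>

lemma is_graph_del_isolated:
  assumes "is_graph H" "isolated H x" "verts H \<noteq> {x}"
  shows "is_graph (del_vertex H x)"
  using assms by (auto simp: is_graph_def isolated_def del_vertex_def)

lemma ex_pendant_host:
  fixes H :: "('w, 'f) mgraph" and G :: "('v, 'e) mgraph"
  assumes H: "is_graph H" and minor: "is_minor G H" and v: "v \<notin> verts G"
  obtains Hp :: "(nat, nat) mgraph"
  where "is_graph Hp" "card (verts Hp) = card (verts H) + 1" "sp Hp \<le> sp H"
    "is_minor (add_vertex G v) Hp"
proof -
  \<comment> \<open>The new host has to live over nat anyway, and there fresh vertices and edges exist.\<close>
  obtain Hn :: "(nat, nat) mgraph" where Hn: "is_graph Hn" and iso: "graph_iso H Hn"
    using ex_nat_graph_iso[OF H] .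
  have fin: "finite (verts Hn)" "verts Hn \<noteq> {}" "finite (edges Hn)"
    using Hn by (simp_all add: is_graph_def)
  have card: "card (verts Hn) = card (verts H)"
    using iso by (auto simp: graph_iso_def bij_betw_same_card)
  have usp_H: "usp H \<le> usp Hn" using iso H Hn by (rule usp_le_graph_iso)
  have minor_n: "is_minor G Hn"
    using minor iso is_graph_ends_in_verts[OF H] by (rule is_minor_graph_iso_host)
  obtain vs es where usp: "is_usp Hn vs es" "length vs = usp Hn" using usp_attained[OF fin(1,2)] .
  obtain w :: nat where w: "w \<notin> verts Hn" using ex_new_if_finite[OF infinite_UNIV_nat fin(1)] by blast
  obtain \<epsilon> :: nat where \<epsilon>: "\<epsilon> \<notin> edges Hn" using ex_new_if_finite[OF infinite_UNIV_nat fin(3)] by blast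
  define Hp where "Hp = add_pendant Hn w \<epsilon> (hd vs)"
  have "vs \<noteq> []" "set vs \<subseteq> verts Hn" using usp(1) by (simp_all add: is_usp_def is_path_def)
  then have "hd vs \<in> verts Hn" using hd_in_set by blast
  then have graph: "is_graph Hp" unfolding Hp_def by (rule is_graph_add_pendant[OF Hn w])
  have card_p: "card (verts Hp) = card (verts H) + 1"
    using w fin card by (simp add: Hp_def add_pendant_def)
  have "is_usp Hp (w # vs) (\<epsilon> # es)"
    unfolding Hp_def using is_graph_ends_in_verts[OF Hn] w \<epsilon> usp(1) by (rule is_usp_add_pendant)
  then have "usp Hn + 1 \<le> usp Hp"
    using length_le_usp graph usp(2) by (fastforce simp: is_graph_def)
  then have "sp Hp \<le> sp H" unfolding sp_def using card_p usp_H by linarith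
  moreover have "is_minor (add_vertex G v) Hp"
    unfolding Hp_def using minor_n is_graph_ends_in_verts[OF Hn] w \<epsilon> v by (rule is_minor_add_pendant)
  ultimately show ?thesis using that graph card_p by blast
qed

lemma spfloor_le:
  fixes H :: "(nat, nat) mgraph"
  assumes "is_graph H" "is_minor X H"
  shows "spfloor X \<le> sp H"
  unfolding spfloor_def using assms by (intro cInf_lower) auto

lemma spfloor_attained:
  assumes "is_graph X"
  obtains H :: "(nat, nat) mgraph" where "is_graph H" "is_minor X H" "spfloor X = sp H"
proof -
  obtain Hn :: "(nat, nat) mgraph" where Hn: "is_graph Hn" and iso: "graph_iso X Hn"
    using ex_nat_graph_iso[OF assms] .
  have "graph_iso Hn X" using iso is_graph_ends_in_verts[OF assms] by (rule graph_iso_sym)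
  then have "is_minor X Hn" by (auto simp: is_minor_def)
  then have "spfloor X \<in> {sp H | H :: (nat, nat) mgraph. is_graph H \<and> is_minor X H}"
    unfolding spfloor_def using Hn by (intro Inf_nat_def1) blast
  with that show ?thesis by blast
qed

lemma spfloor_del_isolated_le:
  assumes "is_graph Gv" "isolated Gv v"
  shows "spfloor (del_vertex Gv v) \<le> spfloor Gv"
proof -
  obtain H :: "(nat, nat) mgraph" where H: "is_graph H" "is_minor Gv H" "spfloor Gv = sp H"
    using spfloor_attained[OF assms(1)] .
  have "is_minor (del_vertex Gv v) H"
    using H(2) minor_step.del_iso[OF assms(2)] is_graph_ends_in_verts[OF H(1)]
    by (rule is_minor_minor_step)
  then show ?thesis using spfloor_le[OF H(1)] H(3) by simp
qed

lemma spfloor_add_vertex_le: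
  assumes "is_graph G" "v \<notin> verts G"
  shows "spfloor (add_vertex G v) \<le> spfloor G"
proof -
  obtain H :: "(nat, nat) mgraph" where H: "is_graph H" "is_minor G H" "spfloor G = sp H"
    using spfloor_attained[OF assms(1)] .
  obtain Hp :: "(nat, nat) mgraph" where "is_graph Hp" "sp Hp \<le> sp H" "is_minor (add_vertex G v) Hp"
    using ex_pendant_host[OF H(1,2) assms(2)] by metis
  then show ?thesis using spfloor_le[of Hp] H(3) by fastforce
qed

theorem lemma2p3:
  fixes Gv :: "('v, 'e) mgraph" and v :: 'v
  assumes "is_graph Gv" and "isolated Gv v" and "verts Gv \<noteq> {v}"
  shows "spfloor Gv = spfloor (del_vertex Gv v) \<and>
    (\<forall>H :: ('w, 'f) mgraph. is_graph H \<and> is_minor (del_vertex Gv v) H \<and>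
        spfloor (del_vertex Gv v) = sp H \<longrightarrow>
      (\<exists>Hp :: (nat, nat) mgraph. is_graph Hp \<and> card (verts Hp) = card (verts H) + 1 \<and>
         spfloor Gv = sp Hp \<and> is_minor Gv Hp))"
proof -
  let ?G = "del_vertex Gv v"
  have Gv: "add_vertex ?G v = Gv"
    using assms(2) by (auto simp: add_vertex_def del_vertex_def isolated_def insert_absorb)
  have G: "is_graph ?G" and v: "v \<notin> verts ?G"
    using is_graph_del_isolated[OF assms] by (simp_all add: del_vertex_def)
  have spfloor_eq: "spfloor Gv = spfloor ?G"
    using spfloor_del_isolated_le[OF assms(1,2)] spfloor_add_vertex_le[OF G v] Gv by simp
  have "\<exists>Hp :: (nat, nat) mgraph. is_graph Hp \<and> card (verts Hp) = card (verts H) + 1 \<and>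
      spfloor Gv = sp Hp \<and> is_minor Gv Hp"
    if H: "is_graph H" "is_minor ?G H" "spfloor ?G = sp H" for H :: "('w, 'f) mgraph"
  proof -
    obtain Hp :: "(nat, nat) mgraph" where Hp: "is_graph Hp" "card (verts Hp) = card (verts H) + 1"
      "sp Hp \<le> sp H" "is_minor Gv Hp"
      using ex_pendant_host[OF H(1,2) v] Gv by metis
    then have "spfloor Gv = sp Hp" using spfloor_le[OF Hp(1,4)] spfloor_eq H(3) by simp
    then show ?thesis using Hp by blast
  qed
  with spfloor_eq show ?thesis by blast
qed

end
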